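(* Let $d\ge2$, $L\ge1$, $\sigma>0$, $\lambda>0$, let $\mu_0^\star,\mu_1^\star\in\mathbb{S}^{d-1}$ be orthonormal, and let $(X_\ell,Z_\ell)_{1\le\ell\le L}$ be i.i.d. with $Z_\ell\sim\mathrm{Bernoulli}(1/2)$ and $X_\ell\mid Z_\ell\sim\mathcal{N}(\mu_{Z_\ell}^\star,\sigma^2I_d)$. Then for $c\in\{0,1\}$, $$\mathbb{E}[T^{\mathrm{lin},\mu_0^\star,\mu_1^\star}(\mathbb{X})_1\mid Z_1=c]=\mu_c^\star\,\frac{\lambda}{L}\big[(L+1)+2(L+3)\sigma^2\big].$$ In particular, for $\lambda=\frac{L}{(L+1)+2(L+3)\sigma^2}$, $\mathbb{E}[T^{\mathrm{lin},\mu_0^\star,\mu_1^\star}(\mathbb{X})_1\mid Z_1=c]=\mu_c^\star$.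
   Context: $\mathbb{X}\in\mathbb{R}^{L\times d}$ has rows $X_1,\dots,X_L$, and $T^{\mathrm{lin},\mu_0,\mu_1}(\mathbb{X})_\ell=\frac{2}{L}\sum_{k=1}^L\lambda\big[(X_\ell^\top\mu_0\mu_0^\top X_k)+(X_\ell^\top\mu_1\mu_1^\top X_k)\big]X_k$. *)

theory Defs
  imports "HOL-Probability.Probability"
begin

definition gauss_density :: "real^'d \<Rightarrow> real \<Rightarrow> real^'d \<Rightarrow> real" where
  "gauss_density mu \<sigma> x = (\<Prod>i\<in>UNIV. normal_density (mu $ i) \<sigma> (x $ i))"

text \<open>Joint density of (X, Z) w.r.t. lborel times counting measure on bool:
  Z ~ Bernoulli(1/2) (True encodes Z = 1), X | Z ~ N(mu_Z, sigma^2 I_d).\<close>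
definition mix_density :: "real^'d \<Rightarrow> real^'d \<Rightarrow> real \<Rightarrow> (real^'d) \<times> bool \<Rightarrow> ennreal" where
  "mix_density mu0 mu1 \<sigma> p =
     ennreal ((1/2) * gauss_density (if snd p then mu1 else mu0) \<sigma> (fst p))"

text \<open>The linear transformer T^{lin,mu0,mu1}; tokens are indexed 0..L-1,
  so the paper's token 1 is index 0.\<close>
definition T_lin :: "real \<Rightarrow> real^'d \<Rightarrow> real^'d \<Rightarrow> nat \<Rightarrow> (nat \<Rightarrow> real^'d) \<Rightarrow> nat \<Rightarrow> real^'d" where
  "T_lin lam mu0 mu1 L Xs l =
     (2 / real L) *\<^sub>R (\<Sum>k<L. (lam * ((Xs l \<bullet> mu0) * (mu0 \<bullet> Xs k)
                                  + (Xs l \<bullet> mu1) * (mu1 \<bullet> Xs k))) *\<^sub>R Xs k)"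

end

theory Submission
  imports Defs
begin

text \<open>
  Expand \<open>T\<^sub>1\<close> as a sum over the tokens \<open>k\<close>. The term \<open>k = 1\<close> involves \<open>X\<^sub>1\<close> alone; on the
  event \<open>Z\<^sub>1 = c\<close> it is a third moment of \<open>N(\<mu>\<^sub>c, \<sigma>\<^sup>2 I)\<close>,
  \<open>E[(X\<bullet>u)\<^sup>2 X] = (\<mu>\<^sub>c\<bullet>u)\<^sup>2 \<mu>\<^sub>c + \<sigma>\<^sup>2 (|u|\<^sup>2 \<mu>\<^sub>c + 2 (\<mu>\<^sub>c\<bullet>u) u)\<close>.
  For \<open>k \<noteq> 1\<close> independence factors the expectation into
  \<open>E[1{Z\<^sub>1 = c} (X\<^sub>1\<bullet>u)] E[(X\<^sub>k\<bullet>u) X\<^sub>k]\<close>, a first moment of the Gaussian times a second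
  moment of the mixture. All Gaussian moments reduce to one-dimensional normal moments because
  the isotropic density is a product over coordinates. With \<open>\<mu>\<^sub>0, \<mu>\<^sub>1\<close> orthonormal and
  \<open>u\<close> ranging over them, the diagonal term contributes \<open>(1 + 4\<sigma>\<^sup>2)/2 \<mu>\<^sub>c\<close> and each of
  the \<open>L - 1\<close> other tokens \<open>(1 + 2\<sigma>\<^sup>2)/4 \<mu>\<^sub>c\<close>; dividing by \<open>P(Z\<^sub>1 = c) = 1/2\<close> gives the claim.
\<close>

section \<open>Bochner integrals on products and vectors\<close>

lemma has_bochner_integral_congI:
  assumes "has_bochner_integral M f x" "\<And>\<omega>. \<omega> \<in> space M \<Longrightarrow> f \<omega> = g \<omega>" "x = y"
  shows "has_bochner_integral M g y"
  using has_bochner_integral_cong[of M M f g x y] assms by simp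

lemma has_bochner_integral_vec_componentwise:
  fixes f :: "'a \<Rightarrow> real^'n"
  assumes "\<And>i. has_bochner_integral M (\<lambda>x. f x $ i) (v $ i)"
  shows "has_bochner_integral M f v"
proof -
  have expansion: "(\<Sum>i\<in>UNIV. y $ i *\<^sub>R axis i 1) = y" for y :: "real^'n"
    by (simp add: vec_eq_iff axis_def if_distrib cong: if_cong)
  have "has_bochner_integral M (\<lambda>x. \<Sum>i\<in>UNIV. f x $ i *\<^sub>R axis i (1::real)) (\<Sum>i\<in>UNIV. v $ i *\<^sub>R axis i 1)"
    using assms by (intro has_bochner_integral_sum has_bochner_integral_scaleR_left)
  then show ?thesis
    by (simp only: expansion)
qed

lemma has_bochner_integral_lborel_prod_vec_nth:
  fixes f :: "'n::finite \<Rightarrow> real \<Rightarrow> real"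
  assumes f: "\<And>i. has_bochner_integral lborel (f i) (v i)"
  shows "has_bochner_integral lborel (\<lambda>x::real^'n. \<Prod>i\<in>UNIV. f i (x $ i)) (\<Prod>i\<in>UNIV. v i)"
proof -
  define e where "e i = (axis i 1 :: real^'n)" for i
  have Basis_eq: "(Basis :: (real^'n) set) = range e"
    by (auto simp: Basis_vec_def e_def)
  have inj: "inj e"
    by (auto simp: inj_def e_def axis_eq_axis)
  define g where "g b = f (inv e b)" for b
  have coord: "(\<Sum>b\<in>Basis. y b *\<^sub>R b :: real^'n) $ i = y (e i)" for y i
  proof -
    have "(\<Sum>b\<in>Basis. y b *\<^sub>R b :: real^'n) $ i = (\<Sum>b\<in>Basis. y b *\<^sub>R b :: real^'n) \<bullet> e i"
      by (simp add: e_def inner_axis)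
    also have "\<dots> = y (e i)"
      using Basis_eq by (subst inner_sum_left_Basis) auto
    finally show ?thesis .
  qed
  have reindex: "(\<Prod>i\<in>UNIV. h (e i)) = (\<Prod>b\<in>Basis. h b)" for h :: "real^'n \<Rightarrow> real"
    by (simp add: Basis_eq prod.reindex[OF inj])
  have g_int: "integrable lborel (g b)" for b
    unfolding g_def by (rule integrable.intros[OF f])
  interpret product_sigma_finite "\<lambda>_::real^'n. lborel"
    by unfold_locales
  have "has_bochner_integral (\<Pi>\<^sub>M b\<in>Basis. lborel) (\<lambda>y. \<Prod>b\<in>Basis. g b (y b))
      (\<Prod>b\<in>Basis. integral\<^sup>L lborel (g b))"
    by (simp add: has_bochner_integral_iff product_integrable_prod product_integral_prod g_int)
  moreover have "(\<Prod>b\<in>Basis. g b (y b)) = (\<Prod>i\<in>UNIV. f i ((\<Sum>b\<in>Basis. y b *\<^sub>R b :: real^'n) $ i))" for y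
    unfolding coord reindex[symmetric] by (simp add: g_def inv_f_f[OF inj])
  moreover have "(\<Prod>b\<in>Basis. integral\<^sup>L lborel (g b)) = (\<Prod>i\<in>UNIV. v i)"
    unfolding reindex[symmetric] by (simp add: g_def inv_f_f[OF inj] has_bochner_integral_integral_eq[OF f])
  moreover have "f i \<in> borel_measurable borel" for i
    using integrable.intros[OF f] by auto
  then have "(\<lambda>x::real^'n. \<Prod>i\<in>UNIV. f i (x $ i)) \<in> borel_measurable borel"
    by measurable
  ultimately show ?thesis
    by (subst lborel_eq) (auto intro!: has_bochner_integral_distr)
qed

lemma has_bochner_integral_pair_count_space_bool:
  fixes H :: "'a \<times> bool \<Rightarrow> 'b::{banach, second_countable_topology}"
  assumes "sigma_finite_measure N" and H_meas: "H \<in> borel_measurable (N \<Otimes>\<^sub>M count_space UNIV)"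
    and H0: "has_bochner_integral N (\<lambda>x. H (x, False)) a"
    and H1: "has_bochner_integral N (\<lambda>x. H (x, True)) b"
  shows "has_bochner_integral (N \<Otimes>\<^sub>M count_space UNIV) H (a + b)"
proof -
  interpret N: sigma_finite_measure N by fact
  interpret B: sigma_finite_measure "count_space (UNIV :: bool set)"
    by (rule sigma_finite_measure_count_space_countable) simp
  interpret pair_sigma_finite N "count_space (UNIV :: bool set)" ..
  have "(\<integral>\<^sup>+p. norm (H p) \<partial>(N \<Otimes>\<^sub>M count_space UNIV))
      = (\<integral>\<^sup>+x. (\<integral>\<^sup>+z. norm (H (x, z)) \<partial>count_space UNIV) \<partial>N)"
    using H_meas by (intro B.nn_integral_fst[symmetric]) measurable
  also have "\<dots> = (\<integral>\<^sup>+x. ennreal (norm (H (x, False))) + ennreal (norm (H (x, True))) \<partial>N)"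
    by (simp add: nn_integral_count_space_finite UNIV_bool)
  also have "\<dots> = (\<integral>\<^sup>+x. norm (H (x, False)) \<partial>N) + (\<integral>\<^sup>+x. norm (H (x, True)) \<partial>N)"
    using H0 H1 by (intro nn_integral_add) (auto simp: has_bochner_integral_iff)
  also have "\<dots> < \<infinity>"
    using H0 H1 by (simp add: has_bochner_integral_iff integrable_iff_bounded)
  finally have "integrable (N \<Otimes>\<^sub>M count_space UNIV) H"
    using H_meas by (simp add: integrable_iff_bounded)
  moreover have "integral\<^sup>L (N \<Otimes>\<^sub>M count_space UNIV) H = (\<integral>x. (\<integral>z. H (x, z) \<partial>count_space UNIV) \<partial>N)"
    using calculation by (rule integral_fst'[symmetric])
  moreover have "\<dots> = a + b"
    using H0 H1 by (simp add: lebesgue_integral_count_space_finite UNIV_bool has_bochner_integral_iff)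
  ultimately show ?thesis
    by (simp add: has_bochner_integral_iff)
qed

lemma (in prob_space) indep_vars_has_bochner_integral_mult:
  fixes f g :: "'b \<Rightarrow> real"
  assumes indep: "indep_vars (\<lambda>_. N) Y I" and ij: "i \<in> I" "j \<in> I" "i \<noteq> j"
    and f_meas: "f \<in> borel_measurable N" and g_meas: "g \<in> borel_measurable N"
    and f: "has_bochner_integral M (\<lambda>\<omega>. f (Y i \<omega>)) a"
    and g: "has_bochner_integral M (\<lambda>\<omega>. g (Y j \<omega>)) b"
  shows "has_bochner_integral M (\<lambda>\<omega>. f (Y i \<omega>) * g (Y j \<omega>)) (a * b)"
proof -
  define h where "h k = (if k = i then f else g)" for k
  have "indep_vars (\<lambda>_. N) Y {i, j}"
    using ij by (intro indep_vars_subset[OF indep]) auto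
  then have h_indep: "indep_vars (\<lambda>_. borel) (\<lambda>k \<omega>. h k (Y k \<omega>)) {i, j}"
    by (rule indep_vars_compose2) (simp add: h_def f_meas g_meas)
  have h_int: "integrable M (\<lambda>\<omega>. h k (Y k \<omega>))" if "k \<in> {i, j}" for k
    using that f g ij by (auto simp: h_def has_bochner_integral_iff)
  have "integrable M (\<lambda>\<omega>. \<Prod>k\<in>{i, j}. h k (Y k \<omega>))"
    by (rule indep_vars_integrable[OF _ h_indep h_int]) simp_all
  moreover have "(\<integral>\<omega>. (\<Prod>k\<in>{i, j}. h k (Y k \<omega>)) \<partial>M) = (\<Prod>k\<in>{i, j}. \<integral>\<omega>. h k (Y k \<omega>) \<partial>M)"
    by (rule indep_vars_lebesgue_integral[OF _ h_indep h_int]) simp_all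
  ultimately show ?thesis
    using ij f g by (simp add: h_def has_bochner_integral_iff)
qed

lemma (in prob_space) indep_vars_has_bochner_integral_scaleR:
  fixes f :: "'b \<Rightarrow> real" and g :: "'b \<Rightarrow> real^'n"
  assumes indep: "indep_vars (\<lambda>_. N) Y I" and ij: "i \<in> I" "j \<in> I" "i \<noteq> j"
    and f_meas: "f \<in> borel_measurable N" and g_meas: "g \<in> borel_measurable N"
    and f: "has_bochner_integral M (\<lambda>\<omega>. f (Y i \<omega>)) a"
    and g: "has_bochner_integral M (\<lambda>\<omega>. g (Y j \<omega>)) b"
  shows "has_bochner_integral M (\<lambda>\<omega>. f (Y i \<omega>) *\<^sub>R g (Y j \<omega>)) (a *\<^sub>R b)"
proof (rule has_bochner_integral_vec_componentwise)
  fix l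
  have "has_bochner_integral M (\<lambda>\<omega>. g (Y j \<omega>) $ l) (b $ l)"
    using has_bochner_integral_inner_left[OF g, of "axis l 1"] by (simp add: inner_axis)
  moreover have "(\<lambda>y. g y $ l) \<in> borel_measurable N"
    using measurable_compose[OF g_meas borel_measurable_nth] by simp
  ultimately show "has_bochner_integral M (\<lambda>\<omega>. (f (Y i \<omega>) *\<^sub>R g (Y j \<omega>)) $ l) ((a *\<^sub>R b) $ l)"
    using indep_vars_has_bochner_integral_mult[OF indep ij f_meas] f by simp
qed

section \<open>Moments of the isotropic Gaussian\<close>

lemma gauss_density_nonneg: "0 \<le> gauss_density m \<sigma> x"
  unfolding gauss_density_def by (intro prod_nonneg) auto

lemma borel_measurable_gauss_density[measurable]: "gauss_density m \<sigma> \<in> borel_measurable borel"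
  unfolding gauss_density_def by measurable

definition normal_raw_moment :: "real \<Rightarrow> real \<Rightarrow> nat \<Rightarrow> real" where
  "normal_raw_moment \<mu> \<sigma> k = (\<integral>t. normal_density \<mu> \<sigma> t * t ^ k \<partial>lborel)"

context
  fixes \<sigma> :: real
  assumes \<sigma>_pos: "0 < \<sigma>"
begin

lemma has_bochner_integral_normal_raw_moment:
  "has_bochner_integral lborel (\<lambda>t. normal_density \<mu> \<sigma> t * t ^ k) (normal_raw_moment \<mu> \<sigma> k)"
proof -
  have "t ^ k = (\<Sum>j\<le>k. of_nat (k choose j) * (t - \<mu>) ^ j * \<mu> ^ (k - j))" for t
    using binomial_ring[of "t - \<mu>" \<mu> k] by simp
  then have "(\<lambda>t. normal_density \<mu> \<sigma> t * t ^ k) =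
      (\<lambda>t. \<Sum>j\<le>k. (of_nat (k choose j) * \<mu> ^ (k - j)) * (normal_density \<mu> \<sigma> t * (t - \<mu>) ^ j))"
    by (simp add: fun_eq_iff sum_distrib_left mult_ac)
  moreover have "integrable lborel (\<lambda>t. \<Sum>j\<le>k. (of_nat (k choose j) * \<mu> ^ (k - j)) * (normal_density \<mu> \<sigma> t * (t - \<mu>) ^ j))"
    using \<sigma>_pos by (intro Bochner_Integration.integrable_sum integrable_mult_right integrable_normal_moment)
  ultimately show ?thesis
    by (simp add: has_bochner_integral_iff normal_raw_moment_def)
qed

lemma normal_raw_moment_0: "normal_raw_moment \<mu> \<sigma> 0 = 1"
  using \<sigma>_pos by (simp add: normal_raw_moment_def)

lemma normal_raw_moment_1: "normal_raw_moment \<mu> \<sigma> 1 = \<mu>"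
  using \<sigma>_pos by (simp add: normal_raw_moment_def integral_normal_moment_nz_1)

lemma normal_raw_moment_2: "normal_raw_moment \<mu> \<sigma> 2 = \<mu>\<^sup>2 + \<sigma>\<^sup>2"
proof -
  have "has_bochner_integral lborel
      (\<lambda>t. normal_density \<mu> \<sigma> t * (t - \<mu>) ^ (2 * 1) + 2 * \<mu> * (normal_density \<mu> \<sigma> t * (t - \<mu>) ^ (2 * 0 + 1))
        + \<mu>\<^sup>2 * normal_density \<mu> \<sigma> t)
      (\<sigma>\<^sup>2 + 2 * \<mu> * 0 + \<mu>\<^sup>2 * 1)"
    using normal_moment_even[OF \<sigma>_pos, of \<mu> 1] normal_moment_odd[OF \<sigma>_pos, of \<mu> 0]
      has_bochner_integral_integrable[of lborel "normal_density \<mu> \<sigma>"] \<sigma>_pos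
    by (intro has_bochner_integral_add has_bochner_integral_mult_right) auto
  then show ?thesis
    by (simp add: normal_raw_moment_def has_bochner_integral_iff power2_eq_square algebra_simps)
qed

lemma normal_raw_moment_3: "normal_raw_moment \<mu> \<sigma> 3 = \<mu> ^ 3 + 3 * \<mu> * \<sigma>\<^sup>2"
proof -
  have "has_bochner_integral lborel
      (\<lambda>t. normal_density \<mu> \<sigma> t * (t - \<mu>) ^ (2 * 1 + 1) + 3 * \<mu> * (normal_density \<mu> \<sigma> t * (t - \<mu>) ^ (2 * 1))
        + 3 * \<mu>\<^sup>2 * (normal_density \<mu> \<sigma> t * (t - \<mu>) ^ (2 * 0 + 1)) + \<mu> ^ 3 * normal_density \<mu> \<sigma> t)
      (0 + 3 * \<mu> * \<sigma>\<^sup>2 + 3 * \<mu>\<^sup>2 * 0 + \<mu> ^ 3 * 1)"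
    using normal_moment_even[OF \<sigma>_pos, of \<mu> 1] normal_moment_odd[OF \<sigma>_pos, of \<mu> 0]
      normal_moment_odd[OF \<sigma>_pos, of \<mu> 1]
      has_bochner_integral_integrable[of lborel "normal_density \<mu> \<sigma>"] \<sigma>_pos
    by (intro has_bochner_integral_add has_bochner_integral_mult_right) auto
  then show ?thesis
    by (simp add: normal_raw_moment_def has_bochner_integral_iff power2_eq_square power3_eq_cube algebra_simps)
qed

lemma has_bochner_integral_gauss_density_monomial:
  "has_bochner_integral lborel (\<lambda>x. gauss_density m \<sigma> x * (\<Prod>i\<in>UNIV. (x $ i) ^ n i))
     (\<Prod>i\<in>UNIV. normal_raw_moment (m $ i) \<sigma> (n i))"
  using has_bochner_integral_lborel_prod_vec_nth[OF has_bochner_integral_normal_raw_moment,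
      of "\<lambda>i. m $ i" n]
  by (simp add: gauss_density_def prod.distrib)

text \<open>The simplifier turns exponents such as \<open>1 + 1 :: nat\<close> into \<open>Suc (Suc 0)\<close>, so the
  moment values are also needed in that form.\<close>

lemmas normal_raw_moment_Suc =
  normal_raw_moment_1[unfolded One_nat_def] normal_raw_moment_2[unfolded numeral_2_eq_2]
  normal_raw_moment_3[unfolded numeral_3_eq_3]

lemma prod_vec_nth_power_if: "(\<Prod>i\<in>UNIV. (x $ i) ^ (if i = a then 1 else 0)) = (x $ a :: real)"
proof -
  have "(x $ i) ^ (if i = a then 1 else 0) = (if i = a then x $ i else 1)" for i
    by simp
  then show ?thesis
    by (simp add: prod.delta)
qed

lemma prod_normal_raw_moment_support:
  assumes "finite S" "\<And>i. i \<notin> S \<Longrightarrow> n i = 0"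
  shows "(\<Prod>i\<in>UNIV. normal_raw_moment (m $ i) \<sigma> (n i)) = (\<Prod>i\<in>S. normal_raw_moment (m $ i) \<sigma> (n i))"
  using assms by (intro prod.mono_neutral_right) (auto simp: normal_raw_moment_0)

lemma has_bochner_integral_gauss_density: "has_bochner_integral lborel (gauss_density m \<sigma>) 1"
  using has_bochner_integral_gauss_density_monomial[of m "\<lambda>_. 0"] by (simp add: normal_raw_moment_0)

lemma has_bochner_integral_gauss_coord:
  "has_bochner_integral lborel (\<lambda>x. gauss_density m \<sigma> x * x $ a) (m $ a)"
proof -
  define n :: "_ \<Rightarrow> nat" where "n i = (if i = a then 1 else 0)" for i
  have "(\<Prod>i\<in>UNIV. normal_raw_moment (m $ i) \<sigma> (n i)) = (\<Prod>i\<in>{a}. normal_raw_moment (m $ i) \<sigma> (n i))"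
    by (rule prod_normal_raw_moment_support) (auto simp: n_def)
  then show ?thesis
    using has_bochner_integral_gauss_density_monomial[of m n]
    by (simp add: n_def prod_vec_nth_power_if normal_raw_moment_Suc)
qed

lemma has_bochner_integral_gauss_coord2:
  "has_bochner_integral lborel (\<lambda>x. gauss_density m \<sigma> x * (x $ a * x $ b))
     (m $ a * m $ b + (if a = b then \<sigma>\<^sup>2 else 0))"
proof -
  define n :: "_ \<Rightarrow> nat" where "n i = (if i = a then 1 else 0) + (if i = b then 1 else 0)" for i
  have "(\<Prod>i\<in>UNIV. normal_raw_moment (m $ i) \<sigma> (n i)) = (\<Prod>i\<in>{a, b}. normal_raw_moment (m $ i) \<sigma> (n i))"
    by (rule prod_normal_raw_moment_support) (auto simp: n_def)
  also have "\<dots> = m $ a * m $ b + (if a = b then \<sigma>\<^sup>2 else 0)"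
    by (cases "a = b") (simp_all add: n_def normal_raw_moment_Suc power2_eq_square)
  finally show ?thesis
    using has_bochner_integral_gauss_density_monomial[of m n]
    by (simp add: n_def power_add prod.distrib prod_vec_nth_power_if)
qed

lemma has_bochner_integral_gauss_coord3:
  "has_bochner_integral lborel (\<lambda>x. gauss_density m \<sigma> x * (x $ a * x $ b * x $ c))
     (m $ a * m $ b * m $ c + \<sigma>\<^sup>2 * ((if a = b then m $ c else 0) + (if a = c then m $ b else 0)
        + (if b = c then m $ a else 0)))"
proof -
  define n :: "_ \<Rightarrow> nat"
    where "n i = (if i = a then 1 else 0) + (if i = b then 1 else 0) + (if i = c then 1 else 0)" for i
  have "(\<Prod>i\<in>UNIV. normal_raw_moment (m $ i) \<sigma> (n i)) = (\<Prod>i\<in>{a, b, c}. normal_raw_moment (m $ i) \<sigma> (n i))"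
    by (rule prod_normal_raw_moment_support) (auto simp: n_def)
  also have "\<dots> = m $ a * m $ b * m $ c + \<sigma>\<^sup>2 * ((if a = b then m $ c else 0)
      + (if a = c then m $ b else 0) + (if b = c then m $ a else 0))"
    by (cases "a = b"; cases "a = c"; cases "b = c")
      (simp_all add: n_def normal_raw_moment_Suc
        power2_eq_square power3_eq_cube insert_commute algebra_simps)
  finally show ?thesis
    using has_bochner_integral_gauss_density_monomial[of m n]
    by (simp add: n_def power_add prod.distrib prod_vec_nth_power_if)
qed

lemma has_bochner_integral_gauss_inner:
  "has_bochner_integral lborel (\<lambda>x. gauss_density m \<sigma> x * (x \<bullet> u)) (m \<bullet> u)"
proof -
  have "has_bochner_integral lborel (\<lambda>x. \<Sum>a\<in>UNIV. u $ a * (gauss_density m \<sigma> x * x $ a))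
      (\<Sum>a\<in>UNIV. u $ a * m $ a)"
    by (intro has_bochner_integral_sum has_bochner_integral_mult_right
        has_bochner_integral_gauss_coord)
  moreover have "gauss_density m \<sigma> x * (x \<bullet> u) = (\<Sum>a\<in>UNIV. u $ a * (gauss_density m \<sigma> x * x $ a))" for x
    by (simp add: inner_vec_def sum_distrib_left mult_ac)
  ultimately show ?thesis
    by (simp add: inner_vec_def mult.commute)
qed

lemma has_bochner_integral_gauss_inner_scaleR:
  "has_bochner_integral lborel (\<lambda>x. gauss_density m \<sigma> x *\<^sub>R ((x \<bullet> u) *\<^sub>R x))
     ((m \<bullet> u) *\<^sub>R m + \<sigma>\<^sup>2 *\<^sub>R u)"
proof (rule has_bochner_integral_vec_componentwise)
  fix i
  have "has_bochner_integral lborel (\<lambda>x. \<Sum>a\<in>UNIV. u $ a * (gauss_density m \<sigma> x * (x $ a * x $ i)))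
      (\<Sum>a\<in>UNIV. u $ a * (m $ a * m $ i + (if a = i then \<sigma>\<^sup>2 else 0)))"
    by (intro has_bochner_integral_sum has_bochner_integral_mult_right
        has_bochner_integral_gauss_coord2)
  moreover have "(gauss_density m \<sigma> x *\<^sub>R ((x \<bullet> u) *\<^sub>R x)) $ i
      = (\<Sum>a\<in>UNIV. u $ a * (gauss_density m \<sigma> x * (x $ a * x $ i)))" for x
    by (simp add: inner_vec_def sum_distrib_left sum_distrib_right mult_ac)
  moreover have "(\<Sum>a\<in>UNIV. u $ a * (m $ a * m $ i + (if a = i then \<sigma>\<^sup>2 else 0)))
      = ((m \<bullet> u) *\<^sub>R m + \<sigma>\<^sup>2 *\<^sub>R u) $ i"
    by (simp add: inner_vec_def ring_distribs sum.distrib sum_distrib_left if_distrib[of "times _"] mult_ac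
        cong: if_cong)
  ultimately show "has_bochner_integral lborel (\<lambda>x. (gauss_density m \<sigma> x *\<^sub>R ((x \<bullet> u) *\<^sub>R x)) $ i)
      (((m \<bullet> u) *\<^sub>R m + \<sigma>\<^sup>2 *\<^sub>R u) $ i)"
    by simp
qed

lemma has_bochner_integral_gauss_inner_sq_scaleR:
  "has_bochner_integral lborel (\<lambda>x. gauss_density m \<sigma> x *\<^sub>R ((x \<bullet> u)\<^sup>2 *\<^sub>R x))
     ((m \<bullet> u)\<^sup>2 *\<^sub>R m + \<sigma>\<^sup>2 *\<^sub>R ((u \<bullet> u) *\<^sub>R m + (2 * (m \<bullet> u)) *\<^sub>R u))"
proof (rule has_bochner_integral_vec_componentwise)
  fix i
  let ?moment = "\<lambda>a b. m $ a * m $ b * m $ i + \<sigma>\<^sup>2 * ((if a = b then m $ i else 0)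
      + (if a = i then m $ b else 0) + (if b = i then m $ a else 0))"
  have "has_bochner_integral lborel
      (\<lambda>x. \<Sum>a\<in>UNIV. u $ a * (\<Sum>b\<in>UNIV. u $ b * (gauss_density m \<sigma> x * (x $ a * x $ b * x $ i))))
      (\<Sum>a\<in>UNIV. u $ a * (\<Sum>b\<in>UNIV. u $ b * ?moment a b))"
    by (intro has_bochner_integral_sum has_bochner_integral_mult_right
        has_bochner_integral_gauss_coord3)
  moreover have "(gauss_density m \<sigma> x *\<^sub>R ((x \<bullet> u)\<^sup>2 *\<^sub>R x)) $ i
      = (\<Sum>a\<in>UNIV. u $ a * (\<Sum>b\<in>UNIV. u $ b * (gauss_density m \<sigma> x * (x $ a * x $ b * x $ i))))" for x
    by (simp add: inner_vec_def power2_eq_square sum_distrib_left sum_distrib_right mult_ac)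
  moreover have "(\<Sum>a\<in>UNIV. u $ a * (\<Sum>b\<in>UNIV. u $ b * ?moment a b))
      = ((m \<bullet> u)\<^sup>2 *\<^sub>R m + \<sigma>\<^sup>2 *\<^sub>R ((u \<bullet> u) *\<^sub>R m + (2 * (m \<bullet> u)) *\<^sub>R u)) $ i"
  proof -
    have sum_if_const: "(\<Sum>b\<in>UNIV. if P then f b else 0) = (if P then \<Sum>b\<in>UNIV. f b else (0::real))"
      for P and f :: "'d \<Rightarrow> real"
      by simp
    show ?thesis
      by (simp add: inner_vec_def power2_eq_square ring_distribs sum.distrib sum_distrib_left
          sum_distrib_right if_distrib[of "times _"] sum_if_const mult_ac cong: if_cong)
  qed
  ultimately show "has_bochner_integral lborel (\<lambda>x. (gauss_density m \<sigma> x *\<^sub>R ((x \<bullet> u)\<^sup>2 *\<^sub>R x)) $ i)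
      (((m \<bullet> u)\<^sup>2 *\<^sub>R m + \<sigma>\<^sup>2 *\<^sub>R ((u \<bullet> u) *\<^sub>R m + (2 * (m \<bullet> u)) *\<^sub>R u)) $ i)"
    by simp
qed

end

section \<open>Tokens drawn from the two-component mixture\<close>

lemma has_bochner_integral_mixture:
  fixes G :: "(real^'d) \<times> bool \<Rightarrow> 'b::{banach, second_countable_topology}"
  assumes XZ: "distributed M (lborel \<Otimes>\<^sub>M count_space UNIV) (\<lambda>\<omega>. (X \<omega>, Z \<omega>)) (mix_density mu0 mu1 \<sigma>)"
    and G_meas[measurable]: "G \<in> borel_measurable (borel \<Otimes>\<^sub>M count_space UNIV)"
    and G0: "has_bochner_integral lborel (\<lambda>x. gauss_density mu0 \<sigma> x *\<^sub>R G (x, False)) a"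
    and G1: "has_bochner_integral lborel (\<lambda>x. gauss_density mu1 \<sigma> x *\<^sub>R G (x, True)) b"
  shows "has_bochner_integral M (\<lambda>\<omega>. G (X \<omega>, Z \<omega>)) ((1/2) *\<^sub>R (a + b))"
proof -
  let ?N = "lborel \<Otimes>\<^sub>M count_space UNIV :: ((real^'d) \<times> bool) measure"
  define f where "f p = 1/2 * gauss_density (if snd p then mu1 else mu0) \<sigma> (fst p)"
    for p :: "(real^'d) \<times> bool"
  have f_meas[measurable]: "f \<in> borel_measurable ?N"
    unfolding f_def by measurable
  have "mix_density mu0 mu1 \<sigma> = (\<lambda>p. ennreal (f p))"
    by (simp add: fun_eq_iff mix_density_def f_def)
  then have distr_eq: "distr M ?N (\<lambda>\<omega>. (X \<omega>, Z \<omega>)) = density ?N f"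
    using distributed_distr_eq_density[OF XZ] by simp
  have XZ_meas: "(\<lambda>\<omega>. (X \<omega>, Z \<omega>)) \<in> measurable M ?N"
    using distributed_measurable[OF XZ] .
  have "has_bochner_integral ?N (\<lambda>p. f p *\<^sub>R G p) ((1/2) *\<^sub>R a + (1/2) *\<^sub>R b)"
    using has_bochner_integral_scaleR_right[OF G0, of "1/2"] has_bochner_integral_scaleR_right[OF G1, of "1/2"]
    by (intro has_bochner_integral_pair_count_space_bool) (auto simp: f_def lborel.sigma_finite_measure_axioms)
  then have "has_bochner_integral (distr M ?N (\<lambda>\<omega>. (X \<omega>, Z \<omega>))) G ((1/2) *\<^sub>R (a + b))"
    unfolding distr_eq scaleR_add_right
    by (intro has_bochner_integral_density) (auto simp: f_def gauss_density_nonneg)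
  then show ?thesis
    using XZ_meas by (simp add: has_bochner_integral_iff integrable_distr_eq integral_distr)
qed

locale gaussian_mixture_tokens = prob_space M
  for M :: "'a measure" and X :: "nat \<Rightarrow> 'a \<Rightarrow> real^'d" and Z :: "nat \<Rightarrow> 'a \<Rightarrow> bool"
    and L :: nat and \<sigma> :: real and mu0 mu1 :: "real^'d" +
  assumes \<sigma>_pos: "0 < \<sigma>"
    and indep: "indep_vars (\<lambda>_. borel \<Otimes>\<^sub>M count_space UNIV) (\<lambda>l \<omega>. (X l \<omega>, Z l \<omega>)) {..<L}"
    and distributed: "l < L \<Longrightarrow>
      distributed M (lborel \<Otimes>\<^sub>M count_space UNIV) (\<lambda>\<omega>. (X l \<omega>, Z l \<omega>)) (mix_density mu0 mu1 \<sigma>)"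
begin

abbreviation token_class :: "nat \<Rightarrow> bool \<Rightarrow> 'a set" where
  "token_class l c \<equiv> {\<omega> \<in> space M. Z l \<omega> = c}"

definition class_mean :: "bool \<Rightarrow> real^'d" where
  "class_mean c = (if c then mu1 else mu0)"

lemma has_bochner_integral_token:
  fixes F :: "real^'d \<Rightarrow> 'b::{banach, second_countable_topology}"
  assumes "l < L" and [measurable]: "F \<in> borel_measurable borel"
    and "has_bochner_integral lborel (\<lambda>x. gauss_density mu0 \<sigma> x *\<^sub>R F x) a"
    and "has_bochner_integral lborel (\<lambda>x. gauss_density mu1 \<sigma> x *\<^sub>R F x) b"
  shows "has_bochner_integral M (\<lambda>\<omega>. F (X l \<omega>)) ((1/2) *\<^sub>R (a + b))"
  using has_bochner_integral_mixture[OF distributed[OF \<open>l < L\<close>], of "\<lambda>p. F (fst p)"] assms by simp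

lemma has_bochner_integral_token_class:
  fixes F :: "real^'d \<Rightarrow> 'b::{banach, second_countable_topology}"
  assumes "l < L" and [measurable]: "F \<in> borel_measurable borel"
    and F: "has_bochner_integral lborel (\<lambda>x. gauss_density (class_mean c) \<sigma> x *\<^sub>R F x) I"
  shows "has_bochner_integral M (\<lambda>\<omega>. indicator (token_class l c) \<omega> *\<^sub>R F (X l \<omega>)) ((1/2) *\<^sub>R I)"
proof -
  have "has_bochner_integral M (\<lambda>\<omega>. if Z l \<omega> = c then F (X l \<omega>) else 0) ((1/2) *\<^sub>R I)"
    using has_bochner_integral_mixture[OF distributed[OF \<open>l < L\<close>],
        where G = "\<lambda>p. if snd p = c then F (fst p) else 0"
          and a = "if c then 0 else I" and b = "if c then I else 0"] F
    by (cases c) (simp_all add: class_mean_def has_bochner_integral_zero cong: if_cong)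
  then show ?thesis
    by (rule has_bochner_integral_congI) (auto simp: indicator_def)
qed

lemma prob_token_class:
  assumes "l < L"
  shows "prob (token_class l c) = 1/2"
proof -
  have "(\<lambda>\<omega>. (X l \<omega>, Z l \<omega>)) \<in> measurable M (lborel \<Otimes>\<^sub>M count_space UNIV)"
    using distributed_measurable[OF distributed[OF assms]] .
  then have [measurable]: "Z l \<in> measurable M (count_space UNIV)"
    using measurable_compose[OF _ measurable_snd] by simp
  have "has_bochner_integral M (\<lambda>\<omega>. indicator (token_class l c) \<omega> *\<^sub>R (1::real)) ((1/2) *\<^sub>R 1)"
    using assms \<sigma>_pos
    by (intro has_bochner_integral_token_class) (simp_all add: has_bochner_integral_gauss_density)
  moreover have "token_class l c \<in> events"
    by measurable
  ultimately show ?thesis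
    by (simp add: has_bochner_integral_iff)
qed

lemma has_bochner_integral_cross_term:
  assumes k: "0 < k" "k < L"
  shows "has_bochner_integral M
      (\<lambda>\<omega>. (indicator (token_class 0 c) \<omega> * (X 0 \<omega> \<bullet> u)) *\<^sub>R ((X k \<omega> \<bullet> u) *\<^sub>R X k \<omega>))
      ((1/4 * (class_mean c \<bullet> u)) *\<^sub>R ((mu0 \<bullet> u) *\<^sub>R mu0 + (mu1 \<bullet> u) *\<^sub>R mu1 + (2 * \<sigma>\<^sup>2) *\<^sub>R u))"
proof -
  define f where "f p = (if snd p = c then fst p \<bullet> u else 0)" for p :: "(real^'d) \<times> bool"
  define g where "g p = (fst p \<bullet> u) *\<^sub>R fst p" for p :: "(real^'d) \<times> bool"
  have "has_bochner_integral M (\<lambda>\<omega>. indicator (token_class 0 c) \<omega> *\<^sub>R (X 0 \<omega> \<bullet> u))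
      ((1/2) *\<^sub>R (class_mean c \<bullet> u))"
    using k \<sigma>_pos
    by (intro has_bochner_integral_token_class) (simp_all add: has_bochner_integral_gauss_inner)
  then have f_int: "has_bochner_integral M (\<lambda>\<omega>. f (X 0 \<omega>, Z 0 \<omega>)) (1/2 * (class_mean c \<bullet> u))"
    by (rule has_bochner_integral_congI) (auto simp: f_def indicator_def)
  have g_int: "has_bochner_integral M (\<lambda>\<omega>. g (X k \<omega>, Z k \<omega>))
      ((1/2) *\<^sub>R ((mu0 \<bullet> u) *\<^sub>R mu0 + \<sigma>\<^sup>2 *\<^sub>R u + ((mu1 \<bullet> u) *\<^sub>R mu1 + \<sigma>\<^sup>2 *\<^sub>R u)))"
    using k unfolding g_def fst_conv
    by (intro has_bochner_integral_token has_bochner_integral_gauss_inner_scaleR[OF \<sigma>_pos]) simp_all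
  have "(0::nat) \<in> {..<L}" "k \<in> {..<L}" "0 \<noteq> k"
    using k by simp_all
  from indep_vars_has_bochner_integral_scaleR[OF indep this _ _ f_int g_int]
  show ?thesis
    by (rule has_bochner_integral_congI)
      (auto simp: f_def g_def indicator_def vec_eq_iff algebra_simps)
qed

lemma has_bochner_integral_self_term:
  assumes "0 < L"
  shows "has_bochner_integral M
      (\<lambda>\<omega>. (indicator (token_class 0 c) \<omega> * (X 0 \<omega> \<bullet> u)) *\<^sub>R ((X 0 \<omega> \<bullet> u) *\<^sub>R X 0 \<omega>))
      ((1/2) *\<^sub>R ((class_mean c \<bullet> u)\<^sup>2 *\<^sub>R class_mean c
        + \<sigma>\<^sup>2 *\<^sub>R ((u \<bullet> u) *\<^sub>R class_mean c + (2 * (class_mean c \<bullet> u)) *\<^sub>R u)))"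
proof -
  have "has_bochner_integral M (\<lambda>\<omega>. indicator (token_class 0 c) \<omega> *\<^sub>R ((X 0 \<omega> \<bullet> u)\<^sup>2 *\<^sub>R X 0 \<omega>))
      ((1/2) *\<^sub>R ((class_mean c \<bullet> u)\<^sup>2 *\<^sub>R class_mean c
        + \<sigma>\<^sup>2 *\<^sub>R ((u \<bullet> u) *\<^sub>R class_mean c + (2 * (class_mean c \<bullet> u)) *\<^sub>R u)))"
    using assms
    by (intro has_bochner_integral_token_class has_bochner_integral_gauss_inner_sq_scaleR[OF \<sigma>_pos]) simp_all
  then show ?thesis
    by (simp add: indicator_def power2_eq_square mult.assoc)
qed

lemma conditional_mean_T_lin:
  assumes L: "0 < L" and ortho: "mu0 \<bullet> mu0 = 1" "mu1 \<bullet> mu1 = 1" "mu0 \<bullet> mu1 = 0"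
  shows "(1 / prob (token_class 0 c)) *\<^sub>R
      (\<integral>\<omega>. indicator (token_class 0 c) \<omega> *\<^sub>R T_lin lam mu0 mu1 L (\<lambda>l. X l \<omega>) 0 \<partial>M)
    = ((lam / real L) * ((real L + 1) + 2 * (real L + 3) * \<sigma>\<^sup>2)) *\<^sub>R class_mean c"
proof -
  define t where
    "t k u \<omega> = (indicator (token_class 0 c) \<omega> * (X 0 \<omega> \<bullet> u)) *\<^sub>R ((X k \<omega> \<bullet> u) *\<^sub>R X k \<omega>)"
    for k u \<omega>
  obtain n where n: "L = Suc n"
    using L by (cases L) auto
  have T_lin_eq: "indicator (token_class 0 c) \<omega> *\<^sub>R T_lin lam mu0 mu1 L (\<lambda>l. X l \<omega>) 0
      = (2 * lam / real L) *\<^sub>R (\<Sum>k<L. t k mu0 \<omega> + t k mu1 \<omega>)" for \<omega>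
    by (simp add: T_lin_def t_def scaleR_sum_right inner_commute algebra_simps)
  have self: "has_bochner_integral M (\<lambda>\<omega>. t 0 mu0 \<omega> + t 0 mu1 \<omega>) ((1/2 * (1 + 4 * \<sigma>\<^sup>2)) *\<^sub>R class_mean c)"
    by (rule has_bochner_integral_congI[OF has_bochner_integral_add[OF
          has_bochner_integral_self_term[OF L, where c = c and u = mu0]
          has_bochner_integral_self_term[OF L, where c = c and u = mu1]]])
      (cases c; simp add: t_def class_mean_def ortho inner_commute vec_eq_iff algebra_simps)+
  have cross: "has_bochner_integral M (\<lambda>\<omega>. t (Suc k) mu0 \<omega> + t (Suc k) mu1 \<omega>)
      ((1/4 * (1 + 2 * \<sigma>\<^sup>2)) *\<^sub>R class_mean c)" if "k < n" for k
    using that n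
    by (intro has_bochner_integral_congI[OF has_bochner_integral_add[OF
          has_bochner_integral_cross_term[where k = "Suc k" and c = c and u = mu0]
          has_bochner_integral_cross_term[where k = "Suc k" and c = c and u = mu1]]])
      (cases c; simp add: t_def class_mean_def ortho inner_commute vec_eq_iff algebra_simps)+
  have "has_bochner_integral M
      (\<lambda>\<omega>. indicator (token_class 0 c) \<omega> *\<^sub>R T_lin lam mu0 mu1 L (\<lambda>l. X l \<omega>) 0)
      ((2 * lam / real L) *\<^sub>R ((1/2 * (1 + 4 * \<sigma>\<^sup>2)) *\<^sub>R class_mean c
        + (\<Sum>k<n. (1/4 * (1 + 2 * \<sigma>\<^sup>2)) *\<^sub>R class_mean c)))"
    unfolding T_lin_eq unfolding n sum.lessThan_Suc_shift
    by (intro has_bochner_integral_scaleR_right has_bochner_integral_add has_bochner_integral_sum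
        self cross) auto
  moreover have "(2 * lam / real L) *\<^sub>R ((1/2 * (1 + 4 * \<sigma>\<^sup>2)) *\<^sub>R class_mean c
        + (\<Sum>k<n. (1/4 * (1 + 2 * \<sigma>\<^sup>2)) *\<^sub>R class_mean c))
      = (1/2 * ((lam / real L) * ((real L + 1) + 2 * (real L + 3) * \<sigma>\<^sup>2))) *\<^sub>R class_mean c"
    unfolding sum_constant_scaleR card_lessThan scaleR_scaleR scaleR_add_left[symmetric]
    by (rule arg_cong[where f = "\<lambda>r. r *\<^sub>R class_mean c"]) (simp add: n field_simps)
  moreover have "prob (token_class 0 c) = 1/2"
    using L by (rule prob_token_class)
  ultimately show ?thesis
    by (simp add: has_bochner_integral_iff)
qed

end

theorem proposition3:
  fixes M :: "'a measure"
    and X :: "nat \<Rightarrow> 'a \<Rightarrow> real^'d"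
    and Z :: "nat \<Rightarrow> 'a \<Rightarrow> bool"
    and L :: nat and \<sigma> lam :: real
    and mu0 mu1 :: "real^'d"
    and c :: bool
  assumes "prob_space M"
    and "CARD('d) \<ge> 2"
    and "L \<ge> 1" and "\<sigma> > 0" and "lam > 0"
    and "norm mu0 = 1" and "norm mu1 = 1" and "mu0 \<bullet> mu1 = 0"
    and "prob_space.indep_vars M (\<lambda>_. borel \<Otimes>\<^sub>M count_space UNIV)
           (\<lambda>l \<omega>. (X l \<omega>, Z l \<omega>)) {..<L}"
    and "\<forall>l<L. distributed M (lborel \<Otimes>\<^sub>M count_space UNIV)
           (\<lambda>\<omega>. (X l \<omega>, Z l \<omega>)) (mix_density mu0 mu1 \<sigma>)"
  shows "(1 / measure M {\<omega> \<in> space M. Z 0 \<omega> = c}) *\<^sub>R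
           (\<integral>\<omega>. indicator {\<omega> \<in> space M. Z 0 \<omega> = c} \<omega> *\<^sub>R
                  T_lin lam mu0 mu1 L (\<lambda>l. X l \<omega>) 0 \<partial>M)
         = ((lam / real L) * ((real L + 1) + 2 * (real L + 3) * \<sigma>\<^sup>2))
             *\<^sub>R (if c then mu1 else mu0)
       \<and> (lam = real L / ((real L + 1) + 2 * (real L + 3) * \<sigma>\<^sup>2) \<longrightarrow>
           (1 / measure M {\<omega> \<in> space M. Z 0 \<omega> = c}) *\<^sub>R
           (\<integral>\<omega>. indicator {\<omega> \<in> space M. Z 0 \<omega> = c} \<omega> *\<^sub>R
                  T_lin lam mu0 mu1 L (\<lambda>l. X l \<omega>) 0 \<partial>M)
           = (if c then mu1 else mu0))"
proof -
  interpret gaussian_mixture_tokens M X Z L \<sigma> mu0 mu1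
    using assms by (simp add: gaussian_mixture_tokens_def gaussian_mixture_tokens_axioms_def)
  have L_pos: "0 < L"
    using assms(3) by simp
  have "mu0 \<bullet> mu0 = 1" "mu1 \<bullet> mu1 = 1"
    using assms(6,7) by (simp_all add: power2_norm_eq_inner[symmetric])
  note mean = conditional_mean_T_lin[OF L_pos this assms(8), where c = c and lam = lam,
      unfolded class_mean_def]
  have "0 < (real L + 1) + 2 * (real L + 3) * \<sigma>\<^sup>2"
    by (rule add_pos_nonneg) simp_all
  then show ?thesis
    using mean L_pos by auto
qed

end
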